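(* Let $\rho>0$. Then the kernel $\mathcal{N}$ belongs to $L^2\big((-\infty,0]\times(-\infty,0],\ |\theta(y)|\,|\theta(s)|\,dy\,ds\big)$; consequently the integral operator $K\psi(y)=\int_{-\infty}^0\mathcal{N}(y,s)\psi(s)\,ds$ is a Hilbert–Schmidt operator on $L^2((-\infty,0],|\theta(y)|\,dy)$.
   Context: The function $\theta$ on $(-\infty,0]$ is $\theta(y)=y$ for $y\in[-1,0]$ and $\theta(y)=-1$ for $y<-1$. For $\rho>0$ and $y,s<0$ the kernel is $$\mathcal{N}(y,s)=e^{-\rho y}\,\frac{\theta(y)}{y}\,\frac{s}{\theta(s)}\,e^{\frac{s^2}{2}}\int_{-\infty}^{\min(y,s)}\frac{e^{-\frac12(u-\rho)^2}}{u}\,du .$$ *)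

theory Defs
  imports "HOL-Analysis.Analysis"
begin

definition theta :: "real \<Rightarrow> real" where
  "theta y = (if y < -1 then -1 else y)"

definition kernelN :: "real \<Rightarrow> real \<Rightarrow> real \<Rightarrow> real" where
  "kernelN \<rho> y s =
     exp (- \<rho> * y) * (theta y / y) * (s / theta s) * exp (s\<^sup>2 / 2) *
     (LBINT u:{..min y s}. exp (- ((u - \<rho>)\<^sup>2) / 2) / u)"

end

theory Submission
  imports Defs "HOL-Real_Asymp.Real_Asymp"
begin

(* With m = min y s, the Gaussian tail estimate
     |\<integral>_{-\<infinity>}^m exp (- (u - \<rho>)\<^sup>2 / 2) / u du| \<le> exp (- (m - \<rho>)\<^sup>2 / 2) / (|m| (\<rho> - m))
   and the bound (min y s)\<^sup>2 for the theta-weights give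
     N(y,s)\<^sup>2 |theta y| |theta s| \<le> exp (s\<^sup>2 - 2 \<rho> y - (m - \<rho>)\<^sup>2) / (\<rho> - m)\<^sup>2,
   which is at most exp (2 \<rho> (s - y)) / (\<rho> - s)\<^sup>2 for s \<le> y and exp (y (s - y)) / (\<rho> - y)\<^sup>2 for y < s.
   Integrating first in y, resp. in s, leaves at most 1 / (2 \<rho> (\<rho> - s)\<^sup>2), resp. 1 / (\<rho> - y)\<^sup>2,
   both integrable on (-\<infinity>, 0]. *)

lemma nn_integral_FTC_atMost:
  fixes f :: "real \<Rightarrow> real"
  assumes f_borel: "f \<in> borel_measurable borel"
    and f: "\<And>x. x \<le> b \<Longrightarrow> DERIV F x :> f x"
    and nonneg: "\<And>x. x \<le> b \<Longrightarrow> 0 \<le> f x"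
    and lim: "(F \<longlongrightarrow> A) at_bot"
  shows "(\<integral>\<^sup>+x. ennreal (f x) * indicator {..b} x \<partial>lborel) = F b - A"
proof -
  have "(\<integral>\<^sup>+x. ennreal (f x) * indicator {..b} x \<partial>lborel)
      = (\<integral>\<^sup>+x. ennreal (f (- x)) * indicator {- b..} x \<partial>lborel)"
    using nn_integral_real_affine[of "\<lambda>x. ennreal (f x) * indicator {..b} x" "-1" 0] f_borel
    by (simp add: indicator_def minus_le_iff)
  also have "\<dots> = - A - (- F (- (- b)))"
  proof (rule nn_integral_FTC_atLeast)
    show "(\<lambda>x. f (- x)) \<in> borel_measurable borel" using f_borel by measurable
    show "DERIV (\<lambda>x. - F (- x)) x :> f (- x)" if "- b \<le> x" for x
      using that by (auto intro!: derivative_eq_intros DERIV_chain2[OF f])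
    show "0 \<le> f (- x)" if "- b \<le> x" for x using that nonneg by simp
    show "((\<lambda>x. - F (- x)) \<longlongrightarrow> - A) at_top"
      by (intro tendsto_minus filterlim_compose[OF lim] filterlim_uminus_at_bot_at_top)
  qed
  finally show ?thesis by simp
qed

lemma nn_integral_exp_affine_Icc:
  fixes a b c d :: real
  assumes "c \<noteq> 0" "a \<le> b"
  shows "(\<integral>\<^sup>+x. ennreal (exp (c * x + d)) * indicator {a..b} x \<partial>lborel)
       = ennreal ((exp (c * b + d) - exp (c * a + d)) / c)"
  using assms
  by (subst nn_integral_FTC_Icc[where F = "\<lambda>x. exp (c * x + d) / c"])
     (auto intro!: derivative_eq_intros simp: diff_divide_distrib)

lemma nn_integral_inverse_square_atMost:
  fixes b c :: real
  assumes "b < c"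
  shows "(\<integral>\<^sup>+x. ennreal (1 / (c - x)\<^sup>2) * indicator {..b} x \<partial>lborel) = ennreal (1 / (c - b))"
  using assms
  by (subst nn_integral_FTC_atMost[where F = "\<lambda>x. 1 / (c - x)" and A = 0])
     (auto intro!: derivative_eq_intros simp: power2_eq_square, real_asymp)

lemma one_minus_exp_neg_square_le_abs: "1 - exp (- (x\<^sup>2)) \<le> \<bar>x :: real\<bar>"
proof (cases "\<bar>x\<bar> \<le> 1")
  case True
  have "1 - exp (- (x\<^sup>2)) \<le> x\<^sup>2"
    using exp_ge_add_one_self[of "- (x\<^sup>2)"] by simp
  also have "\<dots> = \<bar>x\<bar> * \<bar>x\<bar>"
    by (simp add: power2_eq_square)
  also have "\<dots> \<le> \<bar>x\<bar>"
    using True by (intro mult_left_le) auto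
  finally show ?thesis .
next
  case False
  then show ?thesis
    using exp_gt_zero[of "- (x\<^sup>2)"] by linarith
qed

lemma gaussian_moment_atMost:
  fixes c m :: real
  assumes "m \<le> c"
  shows "set_integrable lborel {..m} (\<lambda>u. (c - u) * exp (- ((u - c)\<^sup>2) / 2))"
    and "(LBINT u:{..m}. (c - u) * exp (- ((u - c)\<^sup>2) / 2)) = exp (- ((m - c)\<^sup>2) / 2)"
proof -
  let ?g = "\<lambda>u. (c - u) * exp (- ((u - c)\<^sup>2) / 2)"
  have "(\<integral>\<^sup>+u. ennreal (indicator {..m} u * ?g u) \<partial>lborel)
      = (\<integral>\<^sup>+u. ennreal (?g u) * indicator {..m} u \<partial>lborel)"
    by (intro nn_integral_cong) (simp split: split_indicator)
  also have "\<dots> = ennreal (exp (- ((m - c)\<^sup>2) / 2))"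
  proof (subst nn_integral_FTC_atMost[where F = "\<lambda>u. exp (- ((u - c)\<^sup>2) / 2)" and A = 0])
    show "DERIV (\<lambda>u. exp (- ((u - c)\<^sup>2) / 2)) x :> ?g x" for x
      by (auto intro!: derivative_eq_intros simp: field_simps)
    show "((\<lambda>u. exp (- ((u - c)\<^sup>2) / 2)) \<longlongrightarrow> 0) at_bot"
      by real_asymp
  qed (use assms in auto)
  finally have "has_bochner_integral lborel (\<lambda>u. indicator {..m} u *\<^sub>R ?g u) (exp (- ((m - c)\<^sup>2) / 2))"
    using assms by (intro has_bochner_integral_nn_integral) (auto split: split_indicator)
  then show "set_integrable lborel {..m} ?g" "(LBINT u:{..m}. ?g u) = exp (- ((m - c)\<^sup>2) / 2)"
    by (auto simp: set_integrable_def set_lebesgue_integral_def has_bochner_integral_iff)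
qed

(* For u \<le> m < 0 one has 1 / |u| \<le> (c - u) / (|m| (c - m)), which turns the integrand into
   a multiple of the exact derivative of exp (- (u - c)\<^sup>2 / 2). *)
lemma gaussian_div_tail_bound:
  fixes c m :: real
  assumes m: "m < 0" "m < c"
  shows "set_integrable lborel {..m} (\<lambda>u. exp (- ((u - c)\<^sup>2) / 2) / u)"
    and "\<bar>LBINT u:{..m}. exp (- ((u - c)\<^sup>2) / 2) / u\<bar> \<le> exp (- ((m - c)\<^sup>2) / 2) / (- m * (c - m))"
proof -
  let ?f = "\<lambda>u. exp (- ((u - c)\<^sup>2) / 2) / u"
  let ?g = "\<lambda>u. (c - u) * exp (- ((u - c)\<^sup>2) / 2) / (- m * (c - m))"
  have pointwise: "\<bar>?f u\<bar> \<le> ?g u" if "u \<in> {..m}" for u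
  proof -
    have "1 / - u \<le> 1 / - m"
      using that m by (intro divide_left_mono) (auto intro!: mult_neg_neg)
    also have "\<dots> \<le> (c - u) / (- m * (c - m))"
      using that m by (simp add: field_simps)
    finally have *: "1 / - u \<le> (c - u) / (- m * (c - m))" .
    have "\<bar>?f u\<bar> = exp (- ((u - c)\<^sup>2) / 2) * (1 / - u)"
      using that m by (simp add: abs_divide)
    also have "\<dots> \<le> exp (- ((u - c)\<^sup>2) / 2) * ((c - u) / (- m * (c - m)))"
      using * by (intro mult_left_mono) auto
    also have "\<dots> = ?g u"
      by simp
    finally show ?thesis .
  qed
  have g: "set_integrable lborel {..m} ?g"
    using gaussian_moment_atMost(1)[of m c] m by (intro set_integrable_divide) simp
  show f: "set_integrable lborel {..m} ?f"
  proof (rule set_integrable_bound[OF g])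
    show "set_borel_measurable lborel {..m} ?f"
      by (simp add: set_borel_measurable_def)
    show "AE u in lborel. u \<in> {..m} \<longrightarrow> norm (?f u) \<le> norm (?g u)"
    proof (intro AE_I2 impI)
      fix u :: real assume "u \<in> {..m}"
      from pointwise[OF this] show "norm (?f u) \<le> norm (?g u)"
        unfolding real_norm_def by (rule order_trans) (rule abs_ge_self)
    qed
  qed
  have "\<bar>LBINT u:{..m}. ?f u\<bar> \<le> (LBINT u:{..m}. \<bar>?f u\<bar>)"
    using set_integral_norm_bound[OF f] by simp
  also have "\<dots> \<le> (LBINT u:{..m}. ?g u)"
    by (rule set_integral_mono[OF set_integrable_abs[OF f] g pointwise])
  also have "\<dots> = exp (- ((m - c)\<^sup>2) / 2) / (- m * (c - m))"
    using gaussian_moment_atMost(2)[of m c] m by (simp only: set_integral_divide_zero)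
  finally show "\<bar>LBINT u:{..m}. ?f u\<bar> \<le> exp (- ((m - c)\<^sup>2) / 2) / (- m * (c - m))" .
qed

lemma borel_measurable_LBINT_atMost [measurable]:
  fixes f :: "real \<Rightarrow> real"
  assumes [measurable]: "f \<in> borel_measurable borel" "g \<in> borel_measurable M"
  shows "(\<lambda>x. LBINT u:{..g x}. f u) \<in> borel_measurable M"
proof -
  have "(\<lambda>(m, u). indicator {..m} u *\<^sub>R f u) \<in> borel_measurable (lborel \<Otimes>\<^sub>M lborel)"
    by (simp add: indicator_def case_prod_beta')
  then have "(\<lambda>m. LBINT u:{..m}. f u) \<in> borel_measurable borel"
    using lborel.borel_measurable_lebesgue_integral by (simp add: set_lebesgue_integral_def)
  then show ?thesis
    by (rule measurable_compose[OF assms(2)])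
qed

lemma borel_measurable_theta [measurable]: "theta \<in> borel_measurable borel"
  unfolding theta_def by measurable

lemma borel_measurable_kernelN: "(\<lambda>(y, s). kernelN \<rho> y s) \<in> borel_measurable (lborel \<Otimes>\<^sub>M lborel)"
  unfolding kernelN_def by measurable

lemma theta_weight_left_le:
  assumes "y < 0"
  shows "(theta y / y)\<^sup>2 * \<bar>theta y\<bar> \<le> min 1 (- y)"
proof (cases "y < -1")
  case True
  have "1 \<le> y\<^sup>2"
    using True abs_le_square_iff[of 1 y] by simp
  with True show ?thesis
    by (simp add: theta_def power_divide)
next
  case False
  with assms show ?thesis
    by (simp add: theta_def)
qed

lemma theta_weight_right_eq:
  assumes "s < 0"
  shows "(s / theta s)\<^sup>2 * \<bar>theta s\<bar> = (if s < -1 then s\<^sup>2 else - s)"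
  using assms by (simp add: theta_def power_divide)

lemma theta_weights_le_min_square:
  fixes y s :: real
  assumes y: "y < 0" and s: "s < 0"
  shows "(theta y / y)\<^sup>2 * \<bar>theta y\<bar> * ((s / theta s)\<^sup>2 * \<bar>theta s\<bar>) \<le> (min y s)\<^sup>2"
proof -
  let ?a = "(theta y / y)\<^sup>2 * \<bar>theta y\<bar>" and ?b = "(s / theta s)\<^sup>2 * \<bar>theta s\<bar>"
  have a: "0 \<le> ?a" "?a \<le> 1" "?a \<le> - y"
    using theta_weight_left_le[OF y] by auto
  have sq: "y\<^sup>2 \<le> (min y s)\<^sup>2" "s\<^sup>2 \<le> (min y s)\<^sup>2"
    using y s by (auto simp: min_def abs_le_square_iff[symmetric])
  show ?thesis
  proof (cases "s < -1")
    case True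
    then have "?a * ?b \<le> 1 * s\<^sup>2"
      using a theta_weight_right_eq[OF s] by (intro mult_mono) auto
    with sq show ?thesis by simp
  next
    case False
    then have b: "?b = - s" "- s \<le> 1"
      using theta_weight_right_eq[OF s] by auto
    show ?thesis
    proof (cases "y < -1")
      case True
      have "?a * ?b \<le> 1 * 1"
        using a b s by (intro mult_mono) auto
      also have "\<dots> \<le> y\<^sup>2"
        using True abs_le_square_iff[of 1 y] by simp
      finally show ?thesis using sq by simp
    next
      case False
      have "?a * ?b \<le> (- min y s) * (- min y s)"
        using a b y s by (intro mult_mono) auto
      then show ?thesis by (simp add: power2_eq_square)
    qed
  qed
qed

lemma kernelN_sq_weighted_le:
  fixes \<rho> y s :: real
  assumes "0 < \<rho>" "y < 0" "s < 0"
  shows "(kernelN \<rho> y s)\<^sup>2 * \<bar>theta y\<bar> * \<bar>theta s\<bar>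
       \<le> exp (s\<^sup>2 - 2 * \<rho> * y - (min y s - \<rho>)\<^sup>2) / (\<rho> - min y s)\<^sup>2"
proof -
  define m where "m = min y s"
  define I where "I = (LBINT u:{..m}. exp (- ((u - \<rho>)\<^sup>2) / 2) / u)"
  define W where "W = (theta y / y)\<^sup>2 * \<bar>theta y\<bar> * ((s / theta s)\<^sup>2 * \<bar>theta s\<bar>)"
  have m: "m < 0" "m < \<rho>"
    using assms by (auto simp: m_def)
  have W: "0 \<le> W" "W \<le> m\<^sup>2"
    using theta_weights_le_min_square[OF assms(2,3)] by (auto simp: W_def m_def)
  have "\<bar>I\<bar>\<^sup>2 \<le> (exp (- ((m - \<rho>)\<^sup>2) / 2) / (- m * (\<rho> - m)))\<^sup>2"
    using gaussian_div_tail_bound(2)[OF m] by (intro power_mono) (auto simp: I_def)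
  also have "\<dots> = exp (- ((m - \<rho>)\<^sup>2)) / (m\<^sup>2 * (\<rho> - m)\<^sup>2)"
    by (simp add: power_divide power_mult_distrib exp_double[symmetric])
  finally have I: "I\<^sup>2 \<le> exp (- ((m - \<rho>)\<^sup>2)) / (m\<^sup>2 * (\<rho> - m)\<^sup>2)"
    by simp
  have "(kernelN \<rho> y s)\<^sup>2 * \<bar>theta y\<bar> * \<bar>theta s\<bar>
      = (exp (- \<rho> * y))\<^sup>2 * (exp (s\<^sup>2 / 2))\<^sup>2 * W * I\<^sup>2"
    unfolding kernelN_def W_def I_def m_def by (simp only: power_mult_distrib ac_simps)
  also have "(exp (- \<rho> * y))\<^sup>2 * (exp (s\<^sup>2 / 2))\<^sup>2 = exp (s\<^sup>2 - 2 * \<rho> * y)"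
    by (simp add: exp_double[symmetric] exp_add[symmetric])
  also have "exp (s\<^sup>2 - 2 * \<rho> * y) * W * I\<^sup>2
      \<le> exp (s\<^sup>2 - 2 * \<rho> * y) * m\<^sup>2 * (exp (- ((m - \<rho>)\<^sup>2)) / (m\<^sup>2 * (\<rho> - m)\<^sup>2))"
    unfolding mult.assoc using W I by (intro mult_left_mono mult_mono) auto
  also have "\<dots> = exp (s\<^sup>2 - 2 * \<rho> * y - (m - \<rho>)\<^sup>2) / (\<rho> - m)\<^sup>2"
    using m by (simp add: exp_diff exp_add exp_minus field_simps)
  finally show ?thesis
    by (simp add: m_def)
qed

definition majorant_s_le_y :: "real \<Rightarrow> real \<times> real \<Rightarrow> real" where
  "majorant_s_le_y \<rho> = (\<lambda>(y, s). if s \<le> y \<and> y \<le> 0 then exp (2 * \<rho> * (s - y)) / (\<rho> - s)\<^sup>2 else 0)"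

definition majorant_y_lt_s :: "real \<Rightarrow> real \<times> real \<Rightarrow> real" where
  "majorant_y_lt_s \<rho> = (\<lambda>(y, s). if y < s \<and> s \<le> 0 then exp (y * (s - y)) / (\<rho> - y)\<^sup>2 else 0)"

lemma borel_measurable_majorant_s_le_y [measurable]:
  "majorant_s_le_y \<rho> \<in> borel_measurable (lborel \<Otimes>\<^sub>M lborel)"
  unfolding majorant_s_le_y_def by measurable

lemma borel_measurable_majorant_y_lt_s [measurable]:
  "majorant_y_lt_s \<rho> \<in> borel_measurable (lborel \<Otimes>\<^sub>M lborel)"
  unfolding majorant_y_lt_s_def by measurable

lemma kernelN_sq_weighted_le_majorants:
  fixes \<rho> y s :: real
  assumes "0 < \<rho>" "y < 0" "s < 0"
  shows "(kernelN \<rho> y s)\<^sup>2 * \<bar>theta y\<bar> * \<bar>theta s\<bar> \<le> majorant_s_le_y \<rho> (y, s) + majorant_y_lt_s \<rho> (y, s)"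
proof (cases "s \<le> y")
  case True
  then have "(kernelN \<rho> y s)\<^sup>2 * \<bar>theta y\<bar> * \<bar>theta s\<bar>
      \<le> exp (s\<^sup>2 - 2 * \<rho> * y - (s - \<rho>)\<^sup>2) / (\<rho> - s)\<^sup>2"
    using kernelN_sq_weighted_le[OF assms] by (simp add: min_absorb2)
  also have "s\<^sup>2 - 2 * \<rho> * y - (s - \<rho>)\<^sup>2 = 2 * \<rho> * (s - y) - \<rho>\<^sup>2"
    by (simp add: power2_eq_square algebra_simps)
  also have "exp (2 * \<rho> * (s - y) - \<rho>\<^sup>2) / (\<rho> - s)\<^sup>2 \<le> exp (2 * \<rho> * (s - y)) / (\<rho> - s)\<^sup>2"
    by (intro divide_right_mono) auto
  also have "\<dots> = majorant_s_le_y \<rho> (y, s) + majorant_y_lt_s \<rho> (y, s)"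
    using True assms by (simp add: majorant_s_le_y_def majorant_y_lt_s_def)
  finally show ?thesis .
next
  case False
  then have "(kernelN \<rho> y s)\<^sup>2 * \<bar>theta y\<bar> * \<bar>theta s\<bar>
      \<le> exp (s\<^sup>2 - 2 * \<rho> * y - (y - \<rho>)\<^sup>2) / (\<rho> - y)\<^sup>2"
    using kernelN_sq_weighted_le[OF assms] by (simp add: min_absorb1)
  also have "s\<^sup>2 - 2 * \<rho> * y - (y - \<rho>)\<^sup>2 = y * (s - y) + (s - y) * s - \<rho>\<^sup>2"
    by (simp add: power2_eq_square algebra_simps)
  also have "exp (y * (s - y) + (s - y) * s - \<rho>\<^sup>2) / (\<rho> - y)\<^sup>2 \<le> exp (y * (s - y)) / (\<rho> - y)\<^sup>2"
  proof -
    have "(s - y) * s < 0"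
      using False assms by (intro mult_pos_neg) auto
    then have "y * (s - y) + (s - y) * s - \<rho>\<^sup>2 \<le> y * (s - y)"
      using zero_le_power2[of \<rho>] by linarith
    then show ?thesis
      by (intro divide_right_mono) auto
  qed
  also have "\<dots> = majorant_s_le_y \<rho> (y, s) + majorant_y_lt_s \<rho> (y, s)"
    using False assms by (simp add: majorant_s_le_y_def majorant_y_lt_s_def)
  finally show ?thesis .
qed

lemma kernelN_eq_0_on_axes: "y = 0 \<or> s = 0 \<Longrightarrow> kernelN \<rho> y s = 0"
  by (auto simp: kernelN_def theta_def)

lemma indicator_kernelN_sq_weighted_le_majorants:
  fixes \<rho> y s :: real
  assumes "0 < \<rho>"
  shows "indicator ({..0} \<times> {..0}) (y, s) * ((kernelN \<rho> y s)\<^sup>2 * \<bar>theta y\<bar> * \<bar>theta s\<bar>)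
       \<le> majorant_s_le_y \<rho> (y, s) + majorant_y_lt_s \<rho> (y, s)"
proof -
  have "0 \<le> majorant_s_le_y \<rho> (y, s) + majorant_y_lt_s \<rho> (y, s)"
    by (simp add: majorant_s_le_y_def majorant_y_lt_s_def)
  moreover have "y < 0 \<Longrightarrow> s < 0 \<Longrightarrow> ?thesis"
    using kernelN_sq_weighted_le_majorants[OF assms] by simp
  ultimately show ?thesis
    by (cases "y < 0 \<and> s < 0") (auto simp: kernelN_eq_0_on_axes split: split_indicator)
qed

lemma nn_integral_majorant_s_le_y_le:
  fixes \<rho> s :: real
  assumes "0 < \<rho>"
  shows "(\<integral>\<^sup>+y. ennreal (majorant_s_le_y \<rho> (y, s)) \<partial>lborel)
       \<le> ennreal (1 / (2 * \<rho>)) * (ennreal (1 / (\<rho> - s)\<^sup>2) * indicator {..0} s)"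
proof (cases "s \<le> 0")
  case True
  have exponent: "2 * \<rho> * (s - y) = - 2 * \<rho> * y + 2 * \<rho> * s" for y
    by (simp add: algebra_simps)
  have "(\<integral>\<^sup>+y. ennreal (majorant_s_le_y \<rho> (y, s)) \<partial>lborel)
      = (\<integral>\<^sup>+y. ennreal (exp (- 2 * \<rho> * y + 2 * \<rho> * s)) * indicator {s..0} y * ennreal (1 / (\<rho> - s)\<^sup>2) \<partial>lborel)"
    by (intro nn_integral_cong)
       (auto simp: majorant_s_le_y_def exponent ennreal_mult[symmetric] split: split_indicator)
  also have "\<dots> = (\<integral>\<^sup>+y. ennreal (exp (- 2 * \<rho> * y + 2 * \<rho> * s)) * indicator {s..0} y \<partial>lborel)
      * ennreal (1 / (\<rho> - s)\<^sup>2)"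
    by (rule nn_integral_multc) measurable
  also have "\<dots> = ennreal ((exp (- 2 * \<rho> * 0 + 2 * \<rho> * s) - exp (- 2 * \<rho> * s + 2 * \<rho> * s)) / (- 2 * \<rho>))
      * ennreal (1 / (\<rho> - s)\<^sup>2)"
    using assms True by (subst nn_integral_exp_affine_Icc) auto
  also have "\<dots> \<le> ennreal (1 / (2 * \<rho>)) * ennreal (1 / (\<rho> - s)\<^sup>2)"
    using assms True by (intro mult_right_mono ennreal_leI) (auto simp: field_simps)
  finally show ?thesis
    using True by simp
next
  case False
  then have "majorant_s_le_y \<rho> (y, s) = 0" for y
    by (auto simp: majorant_s_le_y_def)
  then show ?thesis
    by simp
qed

lemma nn_integral_majorant_y_lt_s_le:
  fixes \<rho> y :: real
  assumes "0 < \<rho>"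
  shows "(\<integral>\<^sup>+s. ennreal (majorant_y_lt_s \<rho> (y, s)) \<partial>lborel) \<le> ennreal (1 / (\<rho> - y)\<^sup>2) * indicator {..0} y"
proof (cases "y < 0")
  case True
  have exponent: "y * (s - y) = y * s + - (y\<^sup>2)" for s
    by (simp add: power2_eq_square algebra_simps)
  have "(\<integral>\<^sup>+s. ennreal (majorant_y_lt_s \<rho> (y, s)) \<partial>lborel)
      \<le> (\<integral>\<^sup>+s. ennreal (exp (y * s + - (y\<^sup>2))) * indicator {y..0} s * ennreal (1 / (\<rho> - y)\<^sup>2) \<partial>lborel)"
    by (intro nn_integral_mono)
       (auto simp: majorant_y_lt_s_def exponent ennreal_mult[symmetric] split: split_indicator)
  also have "\<dots> = (\<integral>\<^sup>+s. ennreal (exp (y * s + - (y\<^sup>2))) * indicator {y..0} s \<partial>lborel)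
      * ennreal (1 / (\<rho> - y)\<^sup>2)"
    by (rule nn_integral_multc) measurable
  also have "\<dots> = ennreal ((exp (y * 0 + - (y\<^sup>2)) - exp (y * y + - (y\<^sup>2))) / y) * ennreal (1 / (\<rho> - y)\<^sup>2)"
    using True by (subst nn_integral_exp_affine_Icc) auto
  also have "\<dots> \<le> ennreal 1 * ennreal (1 / (\<rho> - y)\<^sup>2)"
  proof (intro mult_right_mono ennreal_leI)
    have "(exp (y * 0 + - (y\<^sup>2)) - exp (y * y + - (y\<^sup>2))) / y = (1 - exp (- (y\<^sup>2))) / \<bar>y\<bar>"
      using True by (simp add: power2_eq_square field_simps)
    also have "\<dots> \<le> 1"
      using True one_minus_exp_neg_square_le_abs[of y] by (subst divide_le_eq_1_pos) auto
    finally show "(exp (y * 0 + - (y\<^sup>2)) - exp (y * y + - (y\<^sup>2))) / y \<le> 1" .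
  qed simp
  finally show ?thesis
    using True by simp
next
  case False
  then have "majorant_y_lt_s \<rho> (y, s) = 0" for s
    by (auto simp: majorant_y_lt_s_def)
  then show ?thesis
    by simp
qed

lemma integrable_majorant_s_le_y:
  assumes "0 < \<rho>"
  shows "integrable (lborel \<Otimes>\<^sub>M lborel) (majorant_s_le_y \<rho>)"
proof (rule integrableI_nonneg)
  have "(\<integral>\<^sup>+p. ennreal (majorant_s_le_y \<rho> p) \<partial>(lborel \<Otimes>\<^sub>M lborel))
      = (\<integral>\<^sup>+s. \<integral>\<^sup>+y. ennreal (majorant_s_le_y \<rho> (y, s)) \<partial>lborel \<partial>lborel)"
    by (rule lborel_pair.nn_integral_snd[symmetric]) measurable
  also have "\<dots> \<le> (\<integral>\<^sup>+s. ennreal (1 / (2 * \<rho>)) * (ennreal (1 / (\<rho> - s)\<^sup>2) * indicator {..0} s) \<partial>lborel)"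
    using assms by (intro nn_integral_mono nn_integral_majorant_s_le_y_le)
  also have "\<dots> = ennreal (1 / (2 * \<rho>)) * ennreal (1 / \<rho>)"
    using assms by (simp add: nn_integral_cmult nn_integral_inverse_square_atMost)
  also have "\<dots> < \<infinity>"
    by (simp add: ennreal_mult_less_top)
  finally show "(\<integral>\<^sup>+p. ennreal (majorant_s_le_y \<rho> p) \<partial>(lborel \<Otimes>\<^sub>M lborel)) < \<infinity>" .
qed (use assms in \<open>auto simp: majorant_s_le_y_def\<close>)

lemma integrable_majorant_y_lt_s:
  assumes "0 < \<rho>"
  shows "integrable (lborel \<Otimes>\<^sub>M lborel) (majorant_y_lt_s \<rho>)"
proof (rule integrableI_nonneg)
  have "(\<integral>\<^sup>+p. ennreal (majorant_y_lt_s \<rho> p) \<partial>(lborel \<Otimes>\<^sub>M lborel))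
      = (\<integral>\<^sup>+y. \<integral>\<^sup>+s. ennreal (majorant_y_lt_s \<rho> (y, s)) \<partial>lborel \<partial>lborel)"
    by (rule lborel.nn_integral_fst[symmetric]) measurable
  also have "\<dots> \<le> (\<integral>\<^sup>+y. ennreal (1 / (\<rho> - y)\<^sup>2) * indicator {..0} y \<partial>lborel)"
    using assms by (intro nn_integral_mono nn_integral_majorant_y_lt_s_le)
  also have "\<dots> = ennreal (1 / \<rho>)"
    using assms by (simp add: nn_integral_inverse_square_atMost)
  finally show "(\<integral>\<^sup>+p. ennreal (majorant_y_lt_s \<rho> p) \<partial>(lborel \<Otimes>\<^sub>M lborel)) < \<infinity>"
    by (simp add: order_le_less_trans)
qed (use assms in \<open>auto simp: majorant_y_lt_s_def\<close>)

theorem theorem5p7: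
  fixes \<rho> :: real
  assumes "\<rho> > 0"
  shows "set_borel_measurable (lborel \<Otimes>\<^sub>M lborel) ({..0} \<times> {..0})
           (\<lambda>(y, s). kernelN \<rho> y s)
       \<and> set_integrable (lborel \<Otimes>\<^sub>M lborel) ({..0} \<times> {..0})
           (\<lambda>(y, s). (kernelN \<rho> y s)\<^sup>2 * \<bar>theta y\<bar> * \<bar>theta s\<bar>)"
proof
  note borel_measurable_kernelN[measurable]
  show "set_borel_measurable (lborel \<Otimes>\<^sub>M lborel) ({..0} \<times> {..0}) (\<lambda>(y, s). kernelN \<rho> y s)"
    unfolding set_borel_measurable_def by measurable
  have majorant: "integrable (lborel \<Otimes>\<^sub>M lborel) (\<lambda>p. majorant_s_le_y \<rho> p + majorant_y_lt_s \<rho> p)"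
    using assms by (intro Bochner_Integration.integrable_add integrable_majorant_s_le_y integrable_majorant_y_lt_s)
  show "set_integrable (lborel \<Otimes>\<^sub>M lborel) ({..0} \<times> {..0})
      (\<lambda>(y, s). (kernelN \<rho> y s)\<^sup>2 * \<bar>theta y\<bar> * \<bar>theta s\<bar>)"
    unfolding set_integrable_def
  proof (rule Bochner_Integration.integrable_bound[OF majorant])
    show "(\<lambda>p. indicator ({..0} \<times> {..0}) p *\<^sub>R (\<lambda>(y, s). (kernelN \<rho> y s)\<^sup>2 * \<bar>theta y\<bar> * \<bar>theta s\<bar>) p)
        \<in> borel_measurable (lborel \<Otimes>\<^sub>M lborel)"
      by measurable
    show "AE p in lborel \<Otimes>\<^sub>M lborel.
        norm (indicator ({..0} \<times> {..0}) p *\<^sub>R (\<lambda>(y, s). (kernelN \<rho> y s)\<^sup>2 * \<bar>theta y\<bar> * \<bar>theta s\<bar>) p)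
        \<le> norm (majorant_s_le_y \<rho> p + majorant_y_lt_s \<rho> p)"
      using indicator_kernelN_sq_weighted_le_majorants[OF assms]
      by (intro AE_I2) (auto simp: split_beta intro: order_trans[OF _ abs_ge_self])
  qed
qed

end
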